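(* Let $u,v\ge1$, $n\ge0$, $I\in\mathrm{Hilb}^n(\{x^uy^v=0\},0)$, let $N$ be an integer with $y^N\in I$, and put $W^k=I\cap(y^k)$ for $k\ge0$. Let $0\le k\le N-1$ and suppose $F=y^kx^i+y^{k+1}t(x,y)$ and $F'=y^{k+1}x^{i'}+y^{k+2}t'(x,y)$ (with $i,i'\ge0$, $t,t'\in\mathbb{C}[[x,y]]$) satisfy $W^k=W^{k+1}+(F)$ and $W^{k+1}=W^{k+2}+(F')$. Then $i\ge i'$.
   Context: $\mathrm{Hilb}^n(\{x^uy^v=0\},0)$ is the set of ideals $I\subset\mathbb{C}[[x,y]]$ with $\dim_{\mathbb{C}}\mathbb{C}[[x,y]]/I=n$, vanishing locus the origin, and $x^uy^v\in I$. *)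

theory Defs
  imports "HOL-Computational_Algebra.Formal_Power_Series"
begin

text \<open>The ring C[[x,y]] is realised as (C[[x]])[[y]], i.e. the type complex fps fps.
  The outer variable is y, the inner variable is x.\<close>

type_synonym ps2 = "complex fps fps"

definition Xv :: ps2 where "Xv = fps_const fps_X"
definition Yv :: ps2 where "Yv = fps_X"

definition cst :: "complex \<Rightarrow> ps2" where "cst c = fps_const (fps_const c)"

definition is_ideal :: "ps2 set \<Rightarrow> bool" where
  "is_ideal I \<longleftrightarrow> 0 \<in> I \<and> (\<forall>a\<in>I. \<forall>b\<in>I. a + b \<in> I) \<and> (\<forall>r. \<forall>a\<in>I. r * a \<in> I)"

definition principal :: "ps2 \<Rightarrow> ps2 set" where
  "principal f = {r * f | r. True}"

definition ideal_sum :: "ps2 set \<Rightarrow> ps2 set \<Rightarrow> ps2 set" where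
  "ideal_sum A B = {a + b | a b. a \<in> A \<and> b \<in> B}"

definition colength :: "ps2 set \<Rightarrow> nat \<Rightarrow> bool" where
  "colength I n \<longleftrightarrow> (\<exists>f :: nat \<Rightarrow> ps2.
      (\<forall>g. \<exists>c :: nat \<Rightarrow> complex. g - (\<Sum>j<n. cst (c j) * f j) \<in> I) \<and>
      (\<forall>c :: nat \<Rightarrow> complex. (\<Sum>j<n. cst (c j) * f j) \<in> I \<longrightarrow> (\<forall>j<n. c j = 0)))"

text \<open>Hilb^n({x^u y^v = 0}, 0). In the local ring C[[x,y]] every ideal of finite colength
  is supported at the origin, so the vanishing-locus condition is automatic.\<close>
definition Hilb :: "nat \<Rightarrow> nat \<Rightarrow> nat \<Rightarrow> ps2 set set" where
  "Hilb n u v = {I. is_ideal I \<and> colength I n \<and> Xv ^ u * Yv ^ v \<in> I}"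

definition Wk :: "ps2 set \<Rightarrow> nat \<Rightarrow> ps2 set" where
  "Wk I k = I \<inter> principal (Yv ^ k)"

end

theory Submission
  imports Defs
begin

text \<open>Since W^k = W^(k+1) + (F), the generator F lies in W^k, so y F lies in
  W^(k+1) = W^(k+2) + (F'). Writing y F = a + r F' with a divisible by y^(k+2) and comparing
  the coefficients of y^(k+1), which are power series in x, gives x^i = r(x,0) x^i', hence i' \<le> i.\<close>

lemma fps_nth_Yv_power_mult: "fps_nth (Yv ^ m * f) n = (if n < m then 0 else fps_nth f (n - m))"
  unfolding Yv_def by (rule fps_X_power_mult_nth)

lemma fps_nth_Xv_power_plus_Yv_mult_0: "fps_nth (Xv ^ i + Yv * t) 0 = fps_X ^ i"
  unfolding Xv_def Yv_def by (simp add: fps_const_power)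

lemma fps_X_power_dvd_imp_le:
  assumes "(fps_X ^ j :: 'a :: idom fps) dvd fps_X ^ i"
  shows "j \<le> i"
  using dvd_imp_subdegree_le[OF assms] by simp

lemma coeff_dvd_of_mem_ideal_sum_principal:
  assumes "Yv ^ m * g \<in> ideal_sum (principal (Yv ^ (m + 1))) (principal (Yv ^ m * h))"
  shows "fps_nth h 0 dvd fps_nth g 0"
proof -
  from assms obtain s r where decomp: "Yv ^ m * g = s * Yv ^ (m + 1) + r * (Yv ^ m * h)"
    unfolding ideal_sum_def principal_def by blast
  have "fps_nth g 0 = fps_nth (Yv ^ m * g) m"
    by (simp add: fps_nth_Yv_power_mult)
  also have "\<dots> = fps_nth (Yv ^ (m + 1) * s) m + fps_nth (Yv ^ m * (r * h)) m"
    unfolding decomp fps_add_nth by (simp only: mult.commute[of s] mult.left_commute[of r])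
  also have "\<dots> = fps_nth r 0 * fps_nth h 0"
    unfolding fps_nth_Yv_power_mult by simp
  finally show ?thesis by simp
qed

lemma generator_mem_ideal_sum_principal: "0 \<in> A \<Longrightarrow> f \<in> ideal_sum A (principal f)"
  unfolding ideal_sum_def principal_def by force

lemma ideal_sum_mono_left: "A \<subseteq> B \<Longrightarrow> ideal_sum A C \<subseteq> ideal_sum B C"
  unfolding ideal_sum_def by blast

lemma Wk_subset_principal: "Wk I k \<subseteq> principal (Yv ^ k)"
  unfolding Wk_def by blast

lemma zero_mem_Wk: "is_ideal I \<Longrightarrow> 0 \<in> Wk I k"
  unfolding Wk_def is_ideal_def principal_def by force

lemma Yv_mult_mem_Wk:
  assumes "is_ideal I" and "f \<in> Wk I k"
  shows "Yv * f \<in> Wk I (k + 1)"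
proof -
  from assms(2) obtain r where "f \<in> I" and "f = r * Yv ^ k"
    unfolding Wk_def principal_def by blast
  then have "Yv * f \<in> I" and "Yv * f = r * Yv ^ (k + 1)"
    using assms(1) by (auto simp: is_ideal_def algebra_simps)
  then show ?thesis
    unfolding Wk_def principal_def by blast
qed

theorem mainTheorem10:
  fixes u v n N k i i' :: nat and I :: "ps2 set" and t t' :: ps2
  assumes "u \<ge> 1" and "v \<ge> 1"
    and "I \<in> Hilb n u v"
    and "Yv ^ N \<in> I"
    and "k + 1 \<le> N"
    and "Wk I k = ideal_sum (Wk I (k + 1)) (principal (Yv ^ k * Xv ^ i + Yv ^ (k + 1) * t))"
    and "Wk I (k + 1) = ideal_sum (Wk I (k + 2)) (principal (Yv ^ (k + 1) * Xv ^ i' + Yv ^ (k + 2) * t'))"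
  shows "i \<ge> i'"
proof -
  have ideal: "is_ideal I"
    using assms(3) by (simp add: Hilb_def)
  have "Yv ^ k * (Xv ^ i + Yv * t) \<in> Wk I k"
    using assms(6) generator_mem_ideal_sum_principal[OF zero_mem_Wk[OF ideal]]
    by (simp add: algebra_simps)
  then have "Yv ^ (k + 1) * (Xv ^ i + Yv * t) \<in> Wk I (k + 1)"
    using Yv_mult_mem_Wk[OF ideal] by (simp add: mult.assoc)
  also have "\<dots> = ideal_sum (Wk I (k + 2)) (principal (Yv ^ (k + 1) * (Xv ^ i' + Yv * t')))"
    using assms(7) by (simp add: algebra_simps)
  also have "\<dots> \<subseteq> ideal_sum (principal (Yv ^ (k + 1 + 1))) (principal (Yv ^ (k + 1) * (Xv ^ i' + Yv * t')))"
    using ideal_sum_mono_left[OF Wk_subset_principal] by (simp only: add.assoc one_add_one)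
  finally have "fps_nth (Xv ^ i' + Yv * t') 0 dvd fps_nth (Xv ^ i + Yv * t) 0"
    by (rule coeff_dvd_of_mem_ideal_sum_principal)
  then show ?thesis
    unfolding fps_nth_Xv_power_plus_Yv_mult_0 by (rule fps_X_power_dvd_imp_le)
qed

end
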